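(* Let $d,l,m\geq 1$ be integers, and fix arbitrary norms $\|\cdot\|$ on the real vector space $H(d)$ of $d\times d$ Hermitian matrices and on the real vector space $M_{lm}(\mathbb{R})$ of real $l\times m$ matrices. Let $\mathcal{Q}=\{P_1,\dots,P_l\}$ be a measurement scheme consisting of $l$ POVMs, each with outcome set $\{1,\dots,m\}$, and suppose $\mathcal{Q}$ determines any pure state among all states. Then there exists $\epsilon>0$ such that every measurement scheme $\mathcal{Q}'=\{P'_1,\dots,P'_l\}$ (of $l$ POVMs with outcome set $\{1,\dots,m\}$) which is $\epsilon$-close to $\mathcal{Q}$ also determines any pure state among all states.
   Context: A POVM with outcome set $\{1,\dots,m\}$ is a map $j\mapsto P(j)$ into $H(d)$ with $P(j)\geq 0$ for all $j$ and $\sum_{j=1}^m P(j)=\mathbb{1}$. A measurement scheme $\mathcal{Q}=\{P_1,\dots,P_l\}$ induces the real-linear map $M_{\mathcal{Q}}:H(d)\to M_{lm}(\mathbb{R})$, $M_{\mathcal{Q}}(X)_{i,j}=\mathrm{tr}(X P_i(j))$. $\mathcal{Q}$ determines any pure state among all states if for every pure state $\sigma=|\psi\rangle\langle\psi|$ and every state (density matrix) $\varrho$, $M_{\mathcal{Q}}(\sigma)=M_{\mathcal{Q}}(\varrho)$ implies $\varrho=\sigma$. Two measurement schemes $\mathcal{Q},\mathcal{Q}'$ are $\epsilon$-close if $\|M_{\mathcal{Q}}-M_{\mathcal{Q}'}\|_\infty<\epsilon$, where $\|\cdot\|_\infty$ is the operator norm of linear maps $H(d)\to M_{lm}(\mathbb{R})$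 with respect to the fixed norms. *)

theory Defs
  imports "HOL-Analysis.Analysis"
begin

text \<open>d x d complex matrices are \<open>complex^'d^'d\<close>; d = CARD('d).
  Real l x m matrices are \<open>real^'m^'l\<close>; l = CARD('l), m = CARD('m).\<close>

definition hermitian :: "complex^'d^'d \<Rightarrow> bool" where
  "hermitian A \<longleftrightarrow> (\<forall>i j. A $ i $ j = cnj (A $ j $ i))"

definition psd :: "complex^'d^'d \<Rightarrow> bool" where
  "psd A \<longleftrightarrow> hermitian A \<and>
     (\<forall>v::complex^'d. 0 \<le> Re (\<Sum>i\<in>UNIV. \<Sum>j\<in>UNIV. cnj (v $ i) * A $ i $ j * v $ j))"

definition mtrace :: "complex^'d^'d \<Rightarrow> complex" where
  "mtrace A = (\<Sum>i\<in>UNIV. A $ i $ i)"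

definition density_matrix :: "complex^'d^'d \<Rightarrow> bool" where
  "density_matrix \<rho> \<longleftrightarrow> psd \<rho> \<and> mtrace \<rho> = 1"

definition pure_state :: "complex^'d^'d \<Rightarrow> bool" where
  "pure_state \<sigma> \<longleftrightarrow> (\<exists>\<psi>::complex^'d. (\<Sum>i\<in>UNIV. (cmod (\<psi> $ i))\<^sup>2) = 1 \<and>
      \<sigma> = (\<chi> i j. \<psi> $ i * cnj (\<psi> $ j)))"

definition povm :: "('m::finite \<Rightarrow> complex^'d^'d) \<Rightarrow> bool" where
  "povm P \<longleftrightarrow> (\<forall>j. psd (P j)) \<and> (\<Sum>j\<in>UNIV. P j) = mat 1"

definition scheme :: "('l::finite \<Rightarrow> 'm::finite \<Rightarrow> complex^'d^'d) \<Rightarrow> bool" where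
  "scheme Q \<longleftrightarrow> (\<forall>i. povm (Q i))"

definition meas_map :: "('l::finite \<Rightarrow> 'm::finite \<Rightarrow> complex^'d^'d) \<Rightarrow> complex^'d^'d \<Rightarrow> real^'m^'l" where
  "meas_map Q X = (\<chi> i j. Re (mtrace (X ** Q i j)))"

definition determines_pure :: "('l::finite \<Rightarrow> 'm::finite \<Rightarrow> complex^'d^'d) \<Rightarrow> bool" where
  "determines_pure Q \<longleftrightarrow> (\<forall>\<sigma> \<rho>. pure_state \<sigma> \<longrightarrow> density_matrix \<rho> \<longrightarrow>
      meas_map Q \<sigma> = meas_map Q \<rho> \<longrightarrow> \<rho> = \<sigma>)"

definition herm_norm :: "(complex^'d^'d \<Rightarrow> real) \<Rightarrow> bool" where
  "herm_norm N \<longleftrightarrow> (\<forall>X Y. hermitian X \<longrightarrow> hermitian Y \<longrightarrow> N (X + Y) \<le> N X + N Y) \<and>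
     (\<forall>c X. hermitian X \<longrightarrow> N (c *\<^sub>R X) = \<bar>c\<bar> * N X) \<and>
     (\<forall>X. hermitian X \<longrightarrow> 0 \<le> N X) \<and>
     (\<forall>X. hermitian X \<longrightarrow> N X = 0 \<longrightarrow> X = 0)"

definition vec_norm :: "('a::real_vector \<Rightarrow> real) \<Rightarrow> bool" where
  "vec_norm N \<longleftrightarrow> (\<forall>x y. N (x + y) \<le> N x + N y) \<and>
     (\<forall>c x. N (c *\<^sub>R x) = \<bar>c\<bar> * N x) \<and> (\<forall>x. 0 \<le> N x) \<and> (\<forall>x. N x = 0 \<longrightarrow> x = 0)"

definition op_norm :: "(complex^'d^'d \<Rightarrow> real) \<Rightarrow> ('b \<Rightarrow> real) \<Rightarrow> (complex^'d^'d \<Rightarrow> 'b) \<Rightarrow> real" where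
  "op_norm N1 N2 T = Sup {N2 (T X) | X. hermitian X \<and> N1 X \<le> 1}"

end

(*
  A traceless Hermitian matrix X is a positive multiple of rho - sigma, with rho a state and
  sigma a pure state, iff X has at most one negative eigenvalue: if m < 0 is the least eigenvalue
  of X, with unit eigenvector psi, then rho = |psi><psi| - X / m is a state. These matrices form a
  closed cone C, and Q determines pure states iff the measurement map M_Q vanishes on C only at 0.
  By compactness of the unit sphere in C, |M_Q X| >= eps |X| on C for some eps > 0, so every M_Q'
  with |M_Q - M_Q'| < eps still vanishes on C only at 0.
*)

theory Submission
  imports Defs
begin

section \<open>Sesquilinear forms of complex matrices\<close>

definition cinner :: "complex^'n \<Rightarrow> complex^'n \<Rightarrow> complex" where
  "cinner u v = (\<Sum>i\<in>UNIV. cnj (u $ i) * v $ i)"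

definition sesq :: "complex^'n^'n \<Rightarrow> complex^'n \<Rightarrow> complex^'n \<Rightarrow> complex" where
  "sesq X u v = (\<Sum>i\<in>UNIV. \<Sum>j\<in>UNIV. cnj (u $ i) * X $ i $ j * v $ j)"

definition projector :: "complex^'n \<Rightarrow> complex^'n^'n" where
  "projector \<psi> = (\<chi> i j. \<psi> $ i * cnj (\<psi> $ j))"

lemma cnj_mult_self: "cnj z * z = of_real ((cmod z)\<^sup>2)"
  by (metis complex_norm_square mult.commute)

lemma cinner_add_right: "cinner u (v + w) = cinner u v + cinner u w"
  unfolding cinner_def by (simp add: distrib_left sum.distrib)

lemma cinner_diff_right: "cinner u (v - w) = cinner u v - cinner u w"
  unfolding cinner_def by (simp add: right_diff_distrib sum_subtractf)

lemma cinner_smult_right: "cinner u (a *s v) = a * cinner u v"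
  unfolding cinner_def by (simp add: sum_distrib_left ac_simps)

lemma cinner_self: "cinner u u = of_real ((norm u)\<^sup>2)"
  unfolding cinner_def norm_vec_def L2_set_def by (simp add: cnj_mult_self sum_nonneg)

lemma sesq_add_left: "sesq X (u + v) w = sesq X u w + sesq X v w"
  unfolding sesq_def by (simp add: algebra_simps sum.distrib)

lemma sesq_add_right: "sesq X u (v + w) = sesq X u v + sesq X u w"
  unfolding sesq_def by (simp add: algebra_simps sum.distrib)

lemma sesq_smult_left: "sesq X (a *s u) w = cnj a * sesq X u w"
  unfolding sesq_def by (simp add: sum_distrib_left ac_simps)

lemma sesq_smult_right: "sesq X u (a *s w) = a * sesq X u w"
  unfolding sesq_def by (simp add: sum_distrib_left ac_simps)

lemma sesq_diff_matrix: "sesq (X - Y) u v = sesq X u v - sesq Y u v"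
  unfolding sesq_def by (simp add: algebra_simps sum_subtractf)

lemma sesq_scaleR_matrix: "sesq (c *\<^sub>R X) u v = of_real c * sesq X u v"
  unfolding sesq_def vector_scaleR_component
  by (simp add: scaleR_conv_of_real sum_distrib_left ac_simps)

lemma sesq_mat_1: "sesq (mat 1) u v = cinner u v"
  unfolding sesq_def cinner_def mat_def by (simp add: if_distrib if_distribR cong: if_cong)

lemma sesq_axis: "sesq X (axis i 1) (axis j 1) = X $ i $ j"
proof -
  have "(\<Sum>l\<in>UNIV. cnj (axis i 1 $ k) * X $ k $ l * axis j 1 $ l) = (if k = i then X $ k $ j else 0)"
    for k
    by (cases "k = i") (simp_all add: axis_def if_distrib [of "\<lambda>x. _ * x"] cong: if_cong)
  then show ?thesis unfolding sesq_def by simp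
qed

lemma sesq_projector: "sesq (projector \<psi>) u v = cnj (cinner \<psi> u) * cinner \<psi> v"
  unfolding sesq_def cinner_def projector_def by (simp add: sum_product ac_simps)

lemma sesq_expand:
  "sesq X (a *s u + b *s w) (a *s u + b *s w) =
     cnj a * a * sesq X u u + cnj a * b * sesq X u w + cnj b * a * sesq X w u + cnj b * b * sesq X w w"
  by (simp add: sesq_add_left sesq_add_right sesq_smult_left sesq_smult_right algebra_simps)

lemma sesq_scaleR_vector: "sesq X (c *\<^sub>R u) (c *\<^sub>R u) = of_real (c\<^sup>2) * sesq X u u"
proof -
  have "c *\<^sub>R u = of_real c *s u"
    unfolding vec_eq_iff vector_scaleR_component vector_smult_component
    by (simp add: scaleR_conv_of_real)
  then have "sesq X (c *\<^sub>R u) (c *\<^sub>R u) = of_real c * (cnj (of_real c) * sesq X u u)"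
    by (simp only: sesq_smult_left sesq_smult_right)
  then show ?thesis
    by (simp add: power2_eq_square)
qed

lemma hermitian_iff_cnj: "hermitian X \<longleftrightarrow> (\<forall>i j. cnj (X $ i $ j) = X $ j $ i)"
  unfolding hermitian_def by (metis complex_cnj_cnj)

lemma hermitian_cnj: "hermitian X \<Longrightarrow> cnj (X $ i $ j) = X $ j $ i"
  by (simp add: hermitian_iff_cnj)

lemma hermitian_add: "hermitian X \<Longrightarrow> hermitian Y \<Longrightarrow> hermitian (X + Y)"
  unfolding hermitian_iff_cnj by simp

lemma hermitian_diff: "hermitian X \<Longrightarrow> hermitian Y \<Longrightarrow> hermitian (X - Y)"
  unfolding hermitian_iff_cnj by simp

lemma hermitian_scaleR: "hermitian X \<Longrightarrow> hermitian (c *\<^sub>R X)"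
  unfolding hermitian_iff_cnj vector_scaleR_component by (simp add: scaleR_conv_of_real)

lemma hermitian_mat_1: "hermitian (mat 1)"
  unfolding hermitian_def mat_def by simp

lemma hermitian_projector: "hermitian (projector \<psi>)"
  unfolding hermitian_def projector_def by simp

lemma subspace_hermitian: "subspace {X. hermitian X}"
  unfolding subspace_def by (auto intro: hermitian_add hermitian_scaleR simp: hermitian_iff_cnj)

lemma sesq_hermitian_swap:
  assumes "hermitian X"
  shows "sesq X w u = cnj (sesq X u w)"
proof -
  have "sesq X w u = (\<Sum>j\<in>UNIV. \<Sum>i\<in>UNIV. cnj (w $ i) * X $ i $ j * u $ j)"
    unfolding sesq_def by (rule sum.swap)
  also have "\<dots> = cnj (sesq X u w)"
    unfolding sesq_def by (simp add: hermitian_cnj[OF assms] mult.commute mult.left_commute)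
  finally show ?thesis .
qed

lemma sesq_hermitian_real:
  assumes "hermitian X"
  shows "of_real (Re (sesq X v v)) = sesq X v v"
proof -
  have "Im (sesq X v v) = - Im (sesq X v v)"
    by (subst sesq_hermitian_swap[OF assms]) simp
  then show ?thesis by (simp add: complex_eq_iff)
qed

lemma sesq_orthogonal_split:
  assumes "hermitian X" and "sesq X u w = 0"
  shows "sesq X (a *s u + b *s w) (a *s u + b *s w) = cnj a * a * sesq X u u + cnj b * b * sesq X w w"
  using sesq_hermitian_swap[OF assms(1), of u w] assms(2) by (simp add: sesq_expand)

lemma psd_iff_sesq: "psd X \<longleftrightarrow> hermitian X \<and> (\<forall>v. 0 \<le> Re (sesq X v v))"
  unfolding psd_def sesq_def ..

lemma nonneg_quadratic_imp_linear_coeff_eq_0: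
  fixes b c :: real
  assumes "\<And>t. 0 \<le> 2 * t * b + t\<^sup>2 * c"
  shows "b = 0"
proof -
  have "0 \<le> c" using assms[of 1] assms[of "-1"] by simp
  define t where "t = - b / (c + 1)"
  have t: "t * (c + 1) = - b"
    using \<open>0 \<le> c\<close> by (simp add: t_def)
  have "0 \<le> (2 * t * b + t\<^sup>2 * c) * (c + 1)\<^sup>2"
    using assms[of t] by simp
  also have "\<dots> = 2 * b * (t * (c + 1)) * (c + 1) + (t * (c + 1))\<^sup>2 * c"
    by (simp add: algebra_simps power2_eq_square)
  also have "\<dots> = - (b\<^sup>2 * (c + 2))"
    unfolding t by (simp add: algebra_simps power2_eq_square)
  finally have "b\<^sup>2 * (c + 2) \<le> 0" by simp
  then show ?thesis using \<open>0 \<le> c\<close> by (simp add: mult_le_0_iff)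
qed

lemma psd_sesq_eq_0_if_self_eq_0:
  assumes "psd Y" and "sesq Y q q = 0"
  shows "sesq Y q w = 0"
proof -
  have herm: "hermitian Y" and nonneg: "\<And>v. 0 \<le> Re (sesq Y v v)"
    using assms(1) by (auto simp: psd_iff_sesq)
  have Re_eq_0: "Re (sesq Y q w') = 0" for w'
  proof (rule nonneg_quadratic_imp_linear_coeff_eq_0)
    fix t :: real
    have "0 \<le> Re (sesq Y (1 *s q + of_real t *s w') (1 *s q + of_real t *s w'))"
      by (rule nonneg)
    also have "\<dots> = 2 * t * Re (sesq Y q w') + t\<^sup>2 * Re (sesq Y w' w')"
      unfolding sesq_expand using assms(2) sesq_hermitian_swap[OF herm, of q w']
      by (simp add: power2_eq_square)
    finally show "0 \<le> 2 * t * Re (sesq Y q w') + t\<^sup>2 * Re (sesq Y w' w')" .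
  qed
  have "Im (sesq Y q w) = - Re (sesq Y q (\<i> *s w))"
    by (simp add: sesq_smult_right)
  then show ?thesis
    using Re_eq_0[of w] Re_eq_0[of "\<i> *s w"] by (simp add: complex_eq_iff)
qed

lemma psd_mtrace_eq_0_imp_zero:
  assumes "psd X" and "mtrace X = 0"
  shows "X = 0"
proof -
  have herm: "hermitian X" using assms(1) by (simp add: psd_iff_sesq)
  have diag_nonneg: "0 \<le> Re (X $ i $ i)" for i
  proof -
    have "0 \<le> Re (sesq X (axis i 1) (axis i 1))"
      using assms(1) by (simp add: psd_iff_sesq)
    then show ?thesis by (simp add: sesq_axis)
  qed
  have "(\<Sum>i\<in>UNIV. Re (X $ i $ i)) = Re (mtrace X)"
    unfolding mtrace_def by simp
  then have "(\<Sum>i\<in>UNIV. Re (X $ i $ i)) = 0"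
    using assms(2) by simp
  then have "Re (X $ i $ i) = 0" for i
    using diag_nonneg by (simp add: sum_nonneg_eq_0_iff)
  moreover have "Im (X $ i $ i) = 0" for i
    using hermitian_cnj[OF herm, of i i] by (simp add: complex_eq_iff)
  ultimately have "sesq X (axis i 1) (axis i 1) = 0" for i
    by (simp add: sesq_axis complex_eq_iff)
  then have "sesq X (axis i 1) (axis j 1) = 0" for i j
    using psd_sesq_eq_0_if_self_eq_0[OF assms(1)] by blast
  then have "X $ i $ j = 0" for i j
    by (simp add: sesq_axis)
  then show ?thesis by (simp add: vec_eq_iff)
qed

lemma rayleigh_min_exists:
  fixes X :: "complex^'n^'n"
  shows "\<exists>\<psi>. norm \<psi> = 1 \<and> (\<forall>v. Re (sesq X \<psi> \<psi>) * (norm v)\<^sup>2 \<le> Re (sesq X v v))"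
proof -
  let ?S = "sphere (0::complex^'n) 1"
  have cont: "continuous_on ?S (\<lambda>v. Re (sesq X v v))"
    unfolding sesq_def by (intro continuous_intros)
  have "?S \<noteq> {}" by simp
  then obtain \<psi> where \<psi>: "\<psi> \<in> ?S" and min: "\<forall>v\<in>?S. Re (sesq X \<psi> \<psi>) \<le> Re (sesq X v v)"
    using continuous_attains_inf[OF compact_sphere _ cont] by blast
  have "Re (sesq X \<psi> \<psi>) * (norm v)\<^sup>2 \<le> Re (sesq X v v)" for v
  proof (cases "v = 0")
    case True
    then show ?thesis by (simp add: sesq_def)
  next
    case False
    let ?v1 = "(1 / norm v) *\<^sub>R v"
    have "Re (sesq X \<psi> \<psi>) \<le> Re (sesq X ?v1 ?v1)"
      using min False by simp
    also have "\<dots> = Re (sesq X v v) / (norm v)\<^sup>2"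
      by (simp add: sesq_scaleR_vector power_divide)
    finally show ?thesis
      using False by (simp add: pos_le_divide_eq)
  qed
  with \<psi> show ?thesis by auto
qed

text \<open>A minimiser of the Rayleigh quotient is an eigenvector: \<open>X - m I\<close> is positive
  semidefinite with \<open>\<psi>\<close> in its kernel.\<close>

lemma rayleigh_minimizer_orthogonal:
  assumes herm: "hermitian X" and "norm \<psi> = 1"
    and min: "\<And>v. Re (sesq X \<psi> \<psi>) * (norm v)\<^sup>2 \<le> Re (sesq X v v)"
    and "cinner \<psi> w = 0"
  shows "sesq X \<psi> w = 0"
proof -
  define m where "m = Re (sesq X \<psi> \<psi>)"
  define Y where "Y = X - m *\<^sub>R mat 1"
  have sesq_Y: "sesq Y u v = sesq X u v - of_real m * cinner u v" for u v
    unfolding Y_def by (simp add: sesq_diff_matrix sesq_scaleR_matrix sesq_mat_1)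
  have "psd Y"
    unfolding psd_iff_sesq
  proof
    show "hermitian Y"
      unfolding Y_def by (intro hermitian_diff hermitian_scaleR hermitian_mat_1 herm)
    show "\<forall>v. 0 \<le> Re (sesq Y v v)"
      using min by (simp add: sesq_Y cinner_self m_def)
  qed
  moreover have "sesq Y \<psi> \<psi> = 0"
    using sesq_hermitian_real[OF herm, of \<psi>] by (simp add: sesq_Y cinner_self assms(2) m_def)
  ultimately have "sesq Y \<psi> w = 0"
    by (rule psd_sesq_eq_0_if_self_eq_0)
  then show ?thesis by (simp add: sesq_Y assms(4))
qed

section \<open>Differences of a state and a pure state\<close>

text \<open>\<open>nonneg_in_planes X\<close> says that \<open>X\<close> has at most one negative eigenvalue.\<close>

definition nonneg_in_planes :: "complex^'n^'n \<Rightarrow> bool" where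
  "nonneg_in_planes X \<longleftrightarrow> (\<forall>u w. \<exists>(a, b) \<in> sphere (0::complex \<times> complex) 1.
      0 \<le> Re (sesq X (a *s u + b *s w) (a *s u + b *s w)))"

definition pure_diff_cone :: "(complex^'n^'n) set" where
  "pure_diff_cone = {X. hermitian X \<and> mtrace X = 0 \<and> nonneg_in_planes X}"

lemma nonneg_in_planes_orthogonal_nonneg:
  assumes "hermitian X" and "nonneg_in_planes X"
    and neg: "Re (sesq X \<psi> \<psi>) < 0" and "sesq X \<psi> w = 0"
  shows "0 \<le> Re (sesq X w w)"
proof (rule ccontr)
  assume "\<not> 0 \<le> Re (sesq X w w)"
  obtain a b where ab: "(a, b) \<in> sphere 0 1"
    and nonneg: "0 \<le> Re (sesq X (a *s \<psi> + b *s w) (a *s \<psi> + b *s w))"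
    using assms(2) unfolding nonneg_in_planes_def by blast
  have unit: "(cmod a)\<^sup>2 + (cmod b)\<^sup>2 = 1"
    using ab by (simp add: norm_Pair)
  have "(cmod a)\<^sup>2 * Re (sesq X \<psi> \<psi>) + (cmod b)\<^sup>2 * Re (sesq X w w) < 0"
  proof (cases "a = 0")
    case True
    then show ?thesis using unit \<open>\<not> 0 \<le> Re (sesq X w w)\<close> by simp
  next
    case False
    then have "(cmod a)\<^sup>2 * Re (sesq X \<psi> \<psi>) < 0" using neg by (simp add: mult_pos_neg)
    moreover have "(cmod b)\<^sup>2 * Re (sesq X w w) \<le> 0"
      using \<open>\<not> 0 \<le> Re (sesq X w w)\<close> by (simp add: mult_nonneg_nonpos)
    ultimately show ?thesis by linarith
  qed
  moreover have "Re (sesq X (a *s \<psi> + b *s w) (a *s \<psi> + b *s w))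
      = (cmod a)\<^sup>2 * Re (sesq X \<psi> \<psi>) + (cmod b)\<^sup>2 * Re (sesq X w w)"
    using sesq_orthogonal_split[OF assms(1,4)] by (simp add: cnj_mult_self)
  ultimately show False using nonneg by simp
qed

lemma mtrace_diff: "mtrace (X - Y) = mtrace X - mtrace Y"
  unfolding mtrace_def by (simp add: sum_subtractf)

lemma mtrace_scaleR: "mtrace (c *\<^sub>R X) = of_real c * mtrace X"
  unfolding mtrace_def vector_scaleR_component by (simp add: scaleR_conv_of_real sum_distrib_left)

lemma mtrace_projector: "mtrace (projector \<psi>) = cinner \<psi> \<psi>"
  unfolding mtrace_def projector_def cinner_def by (simp add: mult.commute)

lemma pure_state_iff_projector: "pure_state \<sigma> \<longleftrightarrow> (\<exists>\<psi>. norm \<psi> = 1 \<and> \<sigma> = projector \<psi>)"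
  unfolding pure_state_def projector_def norm_vec_def L2_set_def by simp

lemma pure_state_mtrace: "pure_state \<sigma> \<Longrightarrow> mtrace \<sigma> = 1"
  by (auto simp: pure_state_iff_projector mtrace_projector cinner_self)

text \<open>With \<open>m < 0\<close> the minimal Rayleigh quotient of \<open>X\<close>, attained at \<open>\<psi>\<close>, the matrix
  \<open>projector \<psi> - X / m\<close> vanishes on \<open>\<psi>\<close> and agrees with \<open>- X / m\<close> on \<open>\<psi>\<^sup>\<bottom>\<close>.\<close>

lemma psd_projector_minus_scaled:
  assumes herm: "hermitian X" and planes: "nonneg_in_planes X" and "norm \<psi> = 1"
    and min: "\<And>v. Re (sesq X \<psi> \<psi>) * (norm v)\<^sup>2 \<le> Re (sesq X v v)"
    and neg: "Re (sesq X \<psi> \<psi>) < 0"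
  shows "psd (projector \<psi> - (1 / Re (sesq X \<psi> \<psi>)) *\<^sub>R X)"
proof -
  define m where "m = Re (sesq X \<psi> \<psi>)"
  have "0 \<le> Re (sesq (projector \<psi> - (1 / m) *\<^sub>R X) v v)" for v
  proof -
    define \<alpha> where "\<alpha> = cinner \<psi> v"
    define w where "w = v - \<alpha> *s \<psi>"
    have "cinner \<psi> w = 0"
      using cinner_self[of \<psi>] assms(3) by (simp add: w_def \<alpha>_def cinner_diff_right cinner_smult_right)
    then have orth: "sesq X \<psi> w = 0"
      by (rule rayleigh_minimizer_orthogonal[OF herm assms(3) min])
    have v: "v = \<alpha> *s \<psi> + 1 *s w"
      by (simp add: w_def)
    have "Re (sesq X v v) = (cmod \<alpha>)\<^sup>2 * m + Re (sesq X w w)"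
      unfolding v sesq_orthogonal_split[OF herm orth] by (simp add: cnj_mult_self m_def)
    moreover have "Re (sesq (projector \<psi>) v v) = (cmod \<alpha>)\<^sup>2"
      by (simp add: sesq_projector cnj_mult_self \<alpha>_def)
    ultimately have "Re (sesq (projector \<psi> - (1 / m) *\<^sub>R X) v v) = - Re (sesq X w w) / m"
      using neg by (simp add: sesq_diff_matrix sesq_scaleR_matrix m_def field_simps)
    moreover have "0 \<le> Re (sesq X w w)"
      using nonneg_in_planes_orthogonal_nonneg[OF herm planes neg orth] .
    ultimately show ?thesis
      using neg by (simp add: m_def divide_nonneg_neg)
  qed
  moreover have "hermitian (projector \<psi> - (1 / m) *\<^sub>R X)"
    by (intro hermitian_diff hermitian_scaleR hermitian_projector herm)
  ultimately show ?thesis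
    by (simp add: psd_iff_sesq m_def)
qed

lemma pure_diff_cone_imp_state_difference:
  assumes "X \<in> pure_diff_cone" and "X \<noteq> 0"
  obtains \<sigma> \<rho> c where "pure_state \<sigma>" "density_matrix \<rho>" "0 < c" "\<rho> - \<sigma> = c *\<^sub>R X"
proof -
  have herm: "hermitian X" and tr: "mtrace X = 0" and planes: "nonneg_in_planes X"
    using assms(1) by (auto simp: pure_diff_cone_def)
  obtain \<psi> where \<psi>: "norm \<psi> = 1" and min: "\<And>v. Re (sesq X \<psi> \<psi>) * (norm v)\<^sup>2 \<le> Re (sesq X v v)"
    using rayleigh_min_exists[of X] by blast
  define m where "m = Re (sesq X \<psi> \<psi>)"
  have "m < 0"
  proof (rule ccontr)
    assume "\<not> m < 0"
    have "0 \<le> Re (sesq X v v)" for v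
    proof -
      have "0 \<le> m * (norm v)\<^sup>2"
        using \<open>\<not> m < 0\<close> by simp
      then show ?thesis
        using min[of v] by (simp add: m_def)
    qed
    then have "psd X"
      using herm by (simp add: psd_iff_sesq)
    then show False
      using psd_mtrace_eq_0_imp_zero tr assms(2) by blast
  qed
  define \<rho> where "\<rho> = projector \<psi> - (1 / m) *\<^sub>R X"
  show ?thesis
  proof
    show "pure_state (projector \<psi>)"
      using \<psi> by (auto simp: pure_state_iff_projector)
    show "density_matrix \<rho>"
      unfolding density_matrix_def \<rho>_def m_def
      using psd_projector_minus_scaled[OF herm planes \<psi> min] \<open>m < 0\<close> \<psi>
      by (simp add: m_def mtrace_diff mtrace_scaleR mtrace_projector cinner_self tr)
    show "0 < - 1 / m"
      using \<open>m < 0\<close> by simp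
    show "\<rho> - projector \<psi> = (- 1 / m) *\<^sub>R X"
      by (simp add: \<rho>_def)
  qed
qed

lemma ex_sphere_lincomb_eq_0:
  fixes x y :: complex
  shows "\<exists>(a, b) \<in> sphere (0::complex \<times> complex) 1. a * x + b * y = 0"
proof (cases "x = 0 \<and> y = 0")
  case True
  then show ?thesis by (intro bexI[of _ "(1, 0)"]) auto
next
  case False
  define p where "p = sgn (y, - x)"
  have "(y, - x) \<noteq> 0"
    using False by (auto simp: zero_prod_def)
  then have "p \<in> sphere 0 1"
    unfolding p_def mem_sphere_0 norm_sgn by simp
  moreover have "fst p * x + snd p * y = 0"
    by (simp add: p_def sgn_div_norm scaleR_conv_of_real algebra_simps)
  ultimately show ?thesis
    by (intro bexI[of _ p]) (simp_all add: case_prod_beta)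
qed

lemma state_difference_nonneg_in_planes:
  fixes \<sigma> \<rho> :: "complex^'n^'n"
  assumes "pure_state \<sigma>" and "density_matrix \<rho>"
  shows "nonneg_in_planes (\<rho> - \<sigma>)"
  unfolding nonneg_in_planes_def
proof (intro allI)
  fix u w :: "complex^'n"
  obtain \<psi> where \<sigma>: "\<sigma> = projector \<psi>"
    using assms(1) by (auto simp: pure_state_iff_projector)
  obtain a b where ab: "(a, b) \<in> sphere 0 1" and ker: "a * cinner \<psi> u + b * cinner \<psi> w = 0"
    using ex_sphere_lincomb_eq_0 by blast
  let ?z = "a *s u + b *s w"
  have "sesq \<sigma> ?z ?z = 0"
    using ker by (simp add: \<sigma> sesq_projector cinner_add_right cinner_smult_right)
  moreover have "0 \<le> Re (sesq \<rho> ?z ?z)"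
    using assms(2) by (simp add: density_matrix_def psd_iff_sesq)
  ultimately have "0 \<le> Re (sesq (\<rho> - \<sigma>) ?z ?z)"
    by (simp add: sesq_diff_matrix)
  with ab show "\<exists>(a, b) \<in> sphere 0 1. 0 \<le> Re (sesq (\<rho> - \<sigma>) (a *s u + b *s w) (a *s u + b *s w))"
    by blast
qed

lemma state_difference_in_pure_diff_cone:
  assumes "pure_state \<sigma>" and "density_matrix \<rho>"
  shows "\<rho> - \<sigma> \<in> pure_diff_cone"
proof -
  have "hermitian (\<rho> - \<sigma>)"
    using assms by (auto intro!: hermitian_diff hermitian_projector
        simp: density_matrix_def psd_iff_sesq pure_state_iff_projector)
  moreover have "mtrace (\<rho> - \<sigma>) = 0"
    using assms by (simp add: mtrace_diff pure_state_mtrace density_matrix_def)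
  ultimately show ?thesis
    using state_difference_nonneg_in_planes[OF assms] by (simp add: pure_diff_cone_def)
qed

lemma nonneg_in_planes_scaleR:
  fixes X :: "complex^'n^'n"
  assumes "nonneg_in_planes X" and "0 \<le> c"
  shows "nonneg_in_planes (c *\<^sub>R X)"
  unfolding nonneg_in_planes_def
proof (intro allI)
  fix u w :: "complex^'n"
  obtain a b where ab: "(a, b) \<in> sphere 0 1"
    and nonneg: "0 \<le> Re (sesq X (a *s u + b *s w) (a *s u + b *s w))"
    using assms(1) unfolding nonneg_in_planes_def by blast
  show "\<exists>(a, b) \<in> sphere 0 1. 0 \<le> Re (sesq (c *\<^sub>R X) (a *s u + b *s w) (a *s u + b *s w))"
    using ab nonneg assms(2) by (intro bexI[of _ "(a, b)"]) (simp_all add: sesq_scaleR_matrix)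
qed

lemma pure_diff_cone_scaleR: "X \<in> pure_diff_cone \<Longrightarrow> 0 \<le> c \<Longrightarrow> c *\<^sub>R X \<in> pure_diff_cone"
  unfolding pure_diff_cone_def
  by (simp add: hermitian_scaleR mtrace_scaleR nonneg_in_planes_scaleR)

lemma closed_pure_diff_cone: "closed (pure_diff_cone :: (complex^'n^'n) set)"
proof -
  define g where "g u w z = Re (sesq (snd z) (fst (fst z) *s u + snd (fst z) *s w)
      (fst (fst z) *s u + snd (fst z) *s w))"
    for u w :: "complex^'n" and z :: "(complex \<times> complex) \<times> (complex^'n^'n)"
  have "continuous_on UNIV (g u w)" for u w
    unfolding g_def sesq_def vector_scalar_mult_def by (simp; intro continuous_intros)
  then have closed_plane:
      "closed {X. \<exists>p. p \<in> sphere (0::complex \<times> complex) 1 \<and> (p, X) \<in> {z. 0 \<le> g u w z}}" for u w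
    by (intro closed_compact_projection compact_sphere closed_Collect_le continuous_on_const)
  have closed_traceless: "closed {X::complex^'n^'n. mtrace X = 0}"
    unfolding mtrace_def by (intro closed_Collect_eq continuous_intros)
  have "nonneg_in_planes X \<longleftrightarrow>
      (\<forall>u w. \<exists>p. p \<in> sphere (0::complex \<times> complex) 1 \<and> (p, X) \<in> {z. 0 \<le> g u w z})" for X
    unfolding nonneg_in_planes_def g_def Bex_def by (simp add: case_prod_beta)
  then have cone_eq: "pure_diff_cone = {X. hermitian X} \<inter> {X. mtrace X = 0} \<inter>
      (\<Inter>u. \<Inter>w. {X. \<exists>p. p \<in> sphere (0::complex \<times> complex) 1 \<and> (p, X) \<in> {z. 0 \<le> g u w z}})"
    unfolding pure_diff_cone_def by auto
  show ?thesis
    unfolding cone_eq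
    by (intro closed_Int closed_traceless closed_subspace[OF subspace_hermitian]
        closed_INT ballI closed_plane)
qed

lemma linear_meas_map: "linear (meas_map Q)"
proof -
  have entry: "meas_map Q X $ i $ j = Re (\<Sum>k\<in>UNIV. \<Sum>l\<in>UNIV. X $ k $ l * Q i j $ l $ k)" for X i j
    unfolding meas_map_def mtrace_def matrix_matrix_mult_def by simp
  show ?thesis
  proof
    show "meas_map Q (X + Y) = meas_map Q X + meas_map Q Y" for X Y
      by (simp add: vec_eq_iff entry algebra_simps sum.distrib)
    show "meas_map Q (c *\<^sub>R X) = c *\<^sub>R meas_map Q X" for c X
      unfolding vec_eq_iff entry vector_scaleR_component
      by (simp add: scaleR_conv_of_real sum_distrib_left mult.assoc)
  qed
qed

lemma determines_pure_iff_pure_diff_cone_kernel: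
  fixes Q :: "'l::finite \<Rightarrow> 'm::finite \<Rightarrow> complex^'d^'d"
  shows "determines_pure Q \<longleftrightarrow> (\<forall>X \<in> pure_diff_cone. meas_map Q X = 0 \<longrightarrow> X = 0)"
proof
  assume det: "determines_pure Q"
  show "\<forall>X \<in> pure_diff_cone. meas_map Q X = 0 \<longrightarrow> X = 0"
  proof (intro ballI impI)
    fix X assume X: "X \<in> pure_diff_cone" and ker: "meas_map Q X = 0"
    show "X = 0"
    proof (rule ccontr)
      assume "X \<noteq> 0"
      then obtain \<sigma> \<rho> c where \<sigma>: "pure_state \<sigma>" and \<rho>: "density_matrix \<rho>"
        and "0 < c" and diff: "\<rho> - \<sigma> = c *\<^sub>R X"
        using pure_diff_cone_imp_state_difference[OF X] by blast
      have "meas_map Q \<rho> - meas_map Q \<sigma> = c *\<^sub>R meas_map Q X"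
        using linear_diff[OF linear_meas_map] linear_scale[OF linear_meas_map] diff by metis
      then have "\<rho> = \<sigma>"
        using det \<sigma> \<rho> ker unfolding determines_pure_def by simp
      then show False
        using diff \<open>0 < c\<close> \<open>X \<noteq> 0\<close> by simp
    qed
  qed
next
  assume ker: "\<forall>X \<in> pure_diff_cone. meas_map Q X = 0 \<longrightarrow> X = 0"
  show "determines_pure Q"
    unfolding determines_pure_def
  proof (intro allI impI)
    fix \<sigma> \<rho> :: "complex^'d^'d"
    assume \<sigma>: "pure_state \<sigma>" and \<rho>: "density_matrix \<rho>" and eq: "meas_map Q \<sigma> = meas_map Q \<rho>"
    have "meas_map Q (\<rho> - \<sigma>) = 0"
      using eq by (simp add: linear_diff[OF linear_meas_map])
    then have "\<rho> - \<sigma> = 0"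
      using ker state_difference_in_pure_diff_cone[OF \<sigma> \<rho>] by blast
    then show "\<rho> = \<sigma>" by simp
  qed
qed

section \<open>Norms on subspaces of Euclidean spaces\<close>

definition norm_on :: "'a::real_vector set \<Rightarrow> ('a \<Rightarrow> real) \<Rightarrow> bool" where
  "norm_on S N \<longleftrightarrow>
     (\<forall>x\<in>S. \<forall>y\<in>S. N (x + y) \<le> N x + N y) \<and> (\<forall>c. \<forall>x\<in>S. N (c *\<^sub>R x) = \<bar>c\<bar> * N x) \<and>
     (\<forall>x\<in>S. 0 \<le> N x) \<and> (\<forall>x\<in>S. N x = 0 \<longrightarrow> x = 0)"

lemma herm_norm_iff_norm_on: "herm_norm N \<longleftrightarrow> norm_on {X. hermitian X} N"
  unfolding herm_norm_def norm_on_def by auto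

lemma vec_norm_iff_norm_on: "vec_norm N \<longleftrightarrow> norm_on UNIV N"
  unfolding vec_norm_def norm_on_def by auto

lemma norm_on_add_le: "norm_on S N \<Longrightarrow> x \<in> S \<Longrightarrow> y \<in> S \<Longrightarrow> N (x + y) \<le> N x + N y"
  unfolding norm_on_def by simp

lemma norm_on_scaleR: "norm_on S N \<Longrightarrow> x \<in> S \<Longrightarrow> N (c *\<^sub>R x) = \<bar>c\<bar> * N x"
  unfolding norm_on_def by simp

lemma norm_on_pos:
  assumes "norm_on S N" and "x \<in> S" and "x \<noteq> 0"
  shows "0 < N x"
proof -
  have "0 \<le> N x" and "N x \<noteq> 0"
    using assms unfolding norm_on_def by auto
  then show ?thesis by simp
qed

lemma norm_on_zero: "norm_on S N \<Longrightarrow> 0 \<in> S \<Longrightarrow> N 0 = 0"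
  using norm_on_scaleR[of S N 0 0] by simp

lemma norm_on_convex_on:
  assumes "subspace S" and "norm_on S N"
  shows "convex_on S N"
proof (rule convex_onI)
  show "convex S"
    using assms(1) by (rule subspace_imp_convex)
  fix t :: real and x y
  assume t: "0 < t" "t < 1" and xy: "x \<in> S" "y \<in> S"
  have "(1 - t) *\<^sub>R x \<in> S" and "t *\<^sub>R y \<in> S"
    using assms(1) xy by (simp_all add: subspace_mul)
  then have "N ((1 - t) *\<^sub>R x + t *\<^sub>R y) \<le> N ((1 - t) *\<^sub>R x) + N (t *\<^sub>R y)"
    by (rule norm_on_add_le[OF assms(2)])
  also have "\<dots> = (1 - t) * N x + t * N y"
    using t by (simp add: norm_on_scaleR[OF assms(2)] xy)
  finally show "N ((1 - t) *\<^sub>R x + t *\<^sub>R y) \<le> (1 - t) * N x + t * N y" .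
qed

text \<open>A convex function on all of a Euclidean space is continuous; a norm on a subspace \<open>S\<close>
  becomes such a function after composing with a linear retraction onto \<open>S\<close>.\<close>

lemma norm_on_continuous_on:
  fixes N :: "'a::euclidean_space \<Rightarrow> real"
  assumes "subspace S" and "norm_on S N"
    and "linear P" and "\<And>x. P x \<in> S" and "\<And>x. x \<in> S \<Longrightarrow> P x = x"
  shows "continuous_on S N"
proof -
  have "convex_on UNIV (N \<circ> P)"
  proof (rule convex_onI)
    fix t :: real and x y
    have "N (P ((1 - t) *\<^sub>R x + t *\<^sub>R y)) = N ((1 - t) *\<^sub>R P x + t *\<^sub>R P y)"
      using assms(3) by (simp add: linear_add linear_scale)
    also assume "0 < t" "t < 1"
    then have "N ((1 - t) *\<^sub>R P x + t *\<^sub>R P y) \<le> (1 - t) * N (P x) + t * N (P y)"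
      using convex_onD[OF norm_on_convex_on[OF assms(1,2)]] assms(4) by simp
    finally show "(N \<circ> P) ((1 - t) *\<^sub>R x + t *\<^sub>R y) \<le> (1 - t) * (N \<circ> P) x + t * (N \<circ> P) y"
      by simp
  qed simp
  then have "continuous_on UNIV (N \<circ> P)"
    by (rule convex_on_continuous[OF open_UNIV])
  then have "continuous_on S (N \<circ> P)"
    by (rule continuous_on_subset) simp
  then show ?thesis
    by (rule continuous_on_eq) (simp add: assms(5))
qed

definition hermitian_part :: "complex^'n^'n \<Rightarrow> complex^'n^'n" where
  "hermitian_part X = (\<chi> i j. (X $ i $ j + cnj (X $ j $ i)) / 2)"

lemma hermitian_part_component: "hermitian_part X $ i $ j = (X $ i $ j + cnj (X $ j $ i)) / 2"
  by (simp add: hermitian_part_def)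

lemma linear_hermitian_part: "linear hermitian_part"
proof
  show "hermitian_part (X + Y) = hermitian_part X + hermitian_part Y" for X Y :: "complex^'n^'n"
    by (simp add: vec_eq_iff hermitian_part_component add_divide_distrib)
  have "(c *\<^sub>R x + cnj (c *\<^sub>R y)) / 2 = c *\<^sub>R ((x + cnj y) / 2)" for c and x y :: complex
    by (simp add: scaleR_conv_of_real algebra_simps)
  then show "hermitian_part (c *\<^sub>R X) = c *\<^sub>R hermitian_part X" for c and X :: "complex^'n^'n"
    by (simp add: vec_eq_iff hermitian_part_component)
qed

lemma hermitian_hermitian_part: "hermitian (hermitian_part X)"
  unfolding hermitian_iff_cnj by (simp add: hermitian_part_component add.commute)

lemma hermitian_part_id: "hermitian X \<Longrightarrow> hermitian_part X = X"
  by (simp add: vec_eq_iff hermitian_part_component hermitian_cnj)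

lemma herm_norm_continuous_on: "herm_norm N \<Longrightarrow> continuous_on {X. hermitian X} N"
  unfolding herm_norm_iff_norm_on
  by (rule norm_on_continuous_on[OF subspace_hermitian _ linear_hermitian_part])
    (simp_all add: hermitian_hermitian_part hermitian_part_id)

lemma vec_norm_continuous_on:
  fixes N :: "'a::euclidean_space \<Rightarrow> real"
  shows "vec_norm N \<Longrightarrow> continuous_on UNIV N"
  unfolding vec_norm_iff_norm_on
  by (rule norm_on_continuous_on[OF subspace_UNIV _ linear_id]) simp_all

lemma compact_ratio_lower_bound:
  fixes f g :: "'a::topological_space \<Rightarrow> real"
  assumes "compact K" and "continuous_on K f" and "continuous_on K g"
    and f_pos: "\<And>x. x \<in> K \<Longrightarrow> 0 < f x" and g_pos: "\<And>x. x \<in> K \<Longrightarrow> 0 < g x"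
  shows "\<exists>\<epsilon>>0. \<forall>x\<in>K. \<epsilon> * g x \<le> f x"
proof (cases "K = {}")
  case True
  then show ?thesis by (intro exI[of _ 1]) simp
next
  case False
  have "continuous_on K (\<lambda>x. f x / g x)"
    using assms(2,3) by (rule continuous_on_divide) (use g_pos in force)
  then obtain x0 where "x0 \<in> K" and min: "\<forall>x\<in>K. f x0 / g x0 \<le> f x / g x"
    using continuous_attains_inf[OF assms(1) False] by blast
  have "0 < f x0 / g x0"
    using \<open>x0 \<in> K\<close> f_pos g_pos by simp
  moreover have "\<forall>x\<in>K. f x0 / g x0 * g x \<le> f x"
  proof
    fix x assume "x \<in> K"
    then show "f x0 / g x0 * g x \<le> f x"
      using min pos_le_divide_eq[OF g_pos[OF \<open>x \<in> K\<close>]] by blast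
  qed
  ultimately show ?thesis by blast
qed

lemma norm_on_ge_norm:
  fixes N :: "'a::euclidean_space \<Rightarrow> real"
  assumes "subspace S" and N: "norm_on S N" and "continuous_on S N"
  shows "\<exists>c>0. \<forall>x\<in>S. c * norm x \<le> N x"
proof -
  let ?K = "S \<inter> sphere 0 1"
  have "compact ?K"
    by (intro closed_Int_compact closed_subspace compact_sphere assms(1))
  moreover have "continuous_on ?K N"
    by (rule continuous_on_subset[OF assms(3)]) simp
  moreover have "\<And>x. x \<in> ?K \<Longrightarrow> 0 < N x"
    using norm_on_pos[OF N] by force
  moreover have "\<And>x. x \<in> ?K \<Longrightarrow> 0 < norm x"
    by simp
  ultimately obtain c where "0 < c" and c: "\<forall>x\<in>?K. c * norm x \<le> N x"
    using compact_ratio_lower_bound[OF _ _ continuous_on_norm_id] by blast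
  have "c * norm x \<le> N x" if "x \<in> S" for x
  proof (cases "x = 0")
    case True
    then show ?thesis using norm_on_zero[OF N] subspace_0[OF assms(1)] by simp
  next
    case False
    have "(1 / norm x) *\<^sub>R x \<in> ?K"
      using False that assms(1) by (simp add: subspace_mul)
    then have "c \<le> N ((1 / norm x) *\<^sub>R x)"
      using c by fastforce
    also have "\<dots> = N x / norm x"
      using norm_on_scaleR[OF N that] by simp
    finally show ?thesis
      using False by (simp add: pos_le_divide_eq mult.commute)
  qed
  with \<open>0 < c\<close> show ?thesis by blast
qed

lemma op_norm_bound:
  fixes T :: "complex^'d^'d \<Rightarrow> 'b::euclidean_space"
  assumes N1: "herm_norm N1" and N2: "vec_norm N2" and "linear T" and "hermitian X"
  shows "N2 (T X) \<le> op_norm N1 N2 T * N1 X"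
proof -
  have norm1: "norm_on {X. hermitian X} N1" and norm2: "norm_on UNIV N2"
    using N1 N2 by (simp_all add: herm_norm_iff_norm_on vec_norm_iff_norm_on)
  obtain c where "0 < c" and c: "\<And>Y. hermitian Y \<Longrightarrow> c * norm Y \<le> N1 Y"
    using norm_on_ge_norm[OF subspace_hermitian norm1 herm_norm_continuous_on[OF N1]] by blast
  let ?B = "{Y. hermitian Y} \<inter> cball 0 (1 / c)"
  have "continuous_on ?B (\<lambda>Y. N2 (T Y))"
    using continuous_on_compose2[OF vec_norm_continuous_on[OF N2]
        linear_continuous_on[OF linear_conv_bounded_linear[THEN iffD1, OF assms(3)]]]
    by auto
  then have "bounded ((\<lambda>Y. N2 (T Y)) ` ?B)"
    by (intro compact_imp_bounded compact_continuous_image closed_Int_compact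
        closed_subspace[OF subspace_hermitian] compact_cball)
  moreover have "{N2 (T Y) |Y. hermitian Y \<and> N1 Y \<le> 1} \<subseteq> (\<lambda>Y. N2 (T Y)) ` ?B"
  proof clarify
    fix Y assume "hermitian Y" and "N1 Y \<le> 1"
    then have "norm Y \<le> 1 / c"
      using c[of Y] \<open>0 < c\<close> by (simp add: field_simps)
    with \<open>hermitian Y\<close> show "N2 (T Y) \<in> (\<lambda>Y. N2 (T Y)) ` ?B"
      by auto
  qed
  ultimately have sup: "N2 (T Y) \<le> op_norm N1 N2 T" if "hermitian Y" and "N1 Y \<le> 1" for Y
    unfolding op_norm_def using that
    by (intro cSup_upper bdd_above_mono[OF bounded_imp_bdd_above]) auto
  show ?thesis
  proof (cases "X = 0")
    case True
    then show ?thesis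
      using norm_on_zero[OF norm2] linear_0[OF assms(3)]
        norm_on_zero[OF norm1 subspace_0[OF subspace_hermitian]] by simp
  next
    case False
    then have "0 < N1 X"
      using norm_on_pos[OF norm1] assms(4) by simp
    have "N2 (T X) / N1 X = N2 (T ((1 / N1 X) *\<^sub>R X))"
      using \<open>0 < N1 X\<close> by (simp add: linear_scale[OF assms(3)] norm_on_scaleR[OF norm2])
    also have "\<dots> \<le> op_norm N1 N2 T"
      using assms(4) \<open>0 < N1 X\<close>
      by (intro sup) (simp_all add: hermitian_scaleR norm_on_scaleR[OF norm1])
    finally show ?thesis
      using \<open>0 < N1 X\<close> by (simp add: pos_divide_le_eq)
  qed
qed

section \<open>Stability under perturbation\<close>

lemma cone_kernel_trivial_stable:
  fixes T :: "complex^'d^'d \<Rightarrow> 'b::euclidean_space"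
  assumes N1: "herm_norm N1" and N2: "vec_norm N2"
    and "closed C" and C_herm: "C \<subseteq> {X. hermitian X}"
    and C_cone: "\<And>X c. X \<in> C \<Longrightarrow> 0 \<le> c \<Longrightarrow> c *\<^sub>R X \<in> C"
    and "linear T" and ker: "\<And>X. X \<in> C \<Longrightarrow> T X = 0 \<Longrightarrow> X = 0"
  shows "\<exists>\<epsilon>>0. \<forall>T' X. linear T' \<longrightarrow> op_norm N1 N2 (\<lambda>X. T X - T' X) < \<epsilon> \<longrightarrow>
           X \<in> C \<longrightarrow> T' X = 0 \<longrightarrow> X = 0"
proof -
  have norm1: "norm_on {X. hermitian X} N1" and norm2: "norm_on UNIV N2"
    using N1 N2 by (simp_all add: herm_norm_iff_norm_on vec_norm_iff_norm_on)
  let ?K = "C \<inter> sphere 0 1"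
  have "compact ?K"
    using \<open>closed C\<close> by (simp add: closed_Int_compact)
  moreover have "continuous_on ?K (\<lambda>Y. N2 (T Y))"
    using continuous_on_compose2[OF vec_norm_continuous_on[OF N2]
        linear_continuous_on[OF linear_conv_bounded_linear[THEN iffD1, OF assms(6)]]]
    by auto
  moreover have "continuous_on ?K N1"
    using continuous_on_subset[OF herm_norm_continuous_on[OF N1]] C_herm by blast
  moreover have "\<And>Y. Y \<in> ?K \<Longrightarrow> 0 < N2 (T Y)"
    using norm_on_pos[OF norm2] ker by force
  moreover have N1_pos: "\<And>Y. Y \<in> ?K \<Longrightarrow> 0 < N1 Y"
    using norm_on_pos[OF norm1] C_herm by force
  ultimately obtain \<epsilon> where "0 < \<epsilon>" and lower: "\<forall>Y\<in>?K. \<epsilon> * N1 Y \<le> N2 (T Y)"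
    using compact_ratio_lower_bound by blast
  have "X = 0" if "linear T'" and small: "op_norm N1 N2 (\<lambda>X. T X - T' X) < \<epsilon>"
    and "X \<in> C" and "T' X = 0" for T' X
  proof (rule ccontr)
    assume "X \<noteq> 0"
    define Y where "Y = (1 / norm X) *\<^sub>R X"
    have Y: "Y \<in> ?K"
      using C_cone[OF \<open>X \<in> C\<close>, of "1 / norm X"] \<open>X \<noteq> 0\<close> by (simp add: Y_def)
    have "T' Y = 0"
      using \<open>T' X = 0\<close> by (simp add: Y_def linear_scale[OF \<open>linear T'\<close>])
    have "N2 (T Y) = N2 (T Y - T' Y)"
      using \<open>T' Y = 0\<close> by simp
    also have "\<dots> \<le> op_norm N1 N2 (\<lambda>X. T X - T' X) * N1 Y"
      using Y C_herm by (intro op_norm_bound[OF N1 N2] linear_compose_sub assms(6) \<open>linear T'\<close>) auto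
    also have "\<dots> < \<epsilon> * N1 Y"
      using small N1_pos[OF Y] by simp
    also have "\<dots> \<le> N2 (T Y)"
      using lower Y by blast
    finally show False by simp
  qed
  with \<open>0 < \<epsilon>\<close> show ?thesis by blast
qed

theorem theorem2:
  fixes N1 :: "complex^'d^'d \<Rightarrow> real"
    and N2 :: "real^'m^'l \<Rightarrow> real"
    and Q :: "'l::finite \<Rightarrow> 'm::finite \<Rightarrow> complex^'d^'d"
  assumes "herm_norm N1" and "vec_norm N2"
    and "scheme Q" and "determines_pure Q"
  shows "\<exists>\<epsilon>>0. \<forall>Q' :: 'l \<Rightarrow> 'm \<Rightarrow> complex^'d^'d. scheme Q' \<longrightarrow>
           op_norm N1 N2 (\<lambda>X. meas_map Q X - meas_map Q' X) < \<epsilon> \<longrightarrow> determines_pure Q'"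
proof -
  have "pure_diff_cone \<subseteq> {X. hermitian X}"
    by (auto simp: pure_diff_cone_def)
  moreover have "\<And>X. X \<in> pure_diff_cone \<Longrightarrow> meas_map Q X = 0 \<Longrightarrow> X = 0"
    using assms(4) by (simp add: determines_pure_iff_pure_diff_cone_kernel)
  ultimately obtain \<epsilon> where "0 < \<epsilon>" and stable:
    "\<forall>T' X. linear T' \<longrightarrow> op_norm N1 N2 (\<lambda>X. meas_map Q X - T' X) < \<epsilon> \<longrightarrow>
       X \<in> pure_diff_cone \<longrightarrow> T' X = 0 \<longrightarrow> X = 0"
    using cone_kernel_trivial_stable[OF assms(1,2) closed_pure_diff_cone _ pure_diff_cone_scaleR
        linear_meas_map] by blast
  show ?thesis
  proof (intro exI[of _ \<epsilon>] conjI allI impI \<open>0 < \<epsilon>\<close>)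
    fix Q' :: "'l \<Rightarrow> 'm \<Rightarrow> complex^'d^'d"
    assume "op_norm N1 N2 (\<lambda>X. meas_map Q X - meas_map Q' X) < \<epsilon>"
    then show "determines_pure Q'"
      unfolding determines_pure_iff_pure_diff_cone_kernel using stable linear_meas_map[of Q'] by blast
  qed
qed

end
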